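(* Let $T>0$, $W\in C^1([0,T),\mathbb R^{d\times s})$ with $\mathrm{rank}(W(t))=s$ for all $t\in[0,T)$, and let $V(t)=\mathrm{range}(W(t))\in\mathcal G(s,d)$. Then for every $\tau\in[0,T)$ the function $t\mapsto\angle(V(\tau),V(t))$ is differentiable from the right at $t=\tau$, and $$\frac{d}{dt}\angle(V(\tau),V(t))\Big|_{t=\tau+}=\Big\|(I_d-P_{V(\tau)})\,\frac{dW}{dt}(\tau)\,\big(W(\tau)^\top W(\tau)\big)^{-1/2}\Big\|,$$ where $\|\cdot\|$ is the spectral norm on $\mathbb R^{d\times s}$ and $P_{V(\tau)}$ is the orthogonal projection onto $V(\tau)$.
   Context: $\mathcal G(s,d)$ is the Grassmannian of $s$-dimensional subspaces of $\mathbb R^d$. For $V,W\in\mathcal G(s,d)$ choose $P,Q\in\mathbb R^{d\times s}$ with orthonormal columns spanning $V$ and $W$; the principal angles $0\le\phi_1\le\dots\le\phi_s\le\pi/2$ are defined by $\cos\phi_j=\sigma_j$ where $\sigma_1\ge\dots\ge\sigma_s\ge0$ are the singular values of $P^\top Q$, and $\angle(V,W):=\phi_s$ is the maximal principal angle. $(W^\top W)^{-1/2}$ denotes the inverse of the symmetric positive definite square root. *)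

theory Defs
  imports "HOL-Analysis.Analysis"
begin

text \<open>Matrices in R^(d x s) are represented as real^'s^'d (d rows, s columns).\<close>

definition col_space :: "real^'s^'d \<Rightarrow> (real^'d) set" where
  "col_space A = range (\<lambda>x. A *v x)"

definition orthonormal_cols :: "real^'s^'d \<Rightarrow> bool" where
  "orthonormal_cols P \<longleftrightarrow> transpose P ** P = mat 1"

definition real_eigenvalues :: "real^'n^'n \<Rightarrow> real set" where
  "real_eigenvalues A = {l. \<exists>v. v \<noteq> 0 \<and> A *v v = l *s v}"

definition singular_values :: "real^'n^'m \<Rightarrow> real set" where
  "singular_values A = sqrt ` real_eigenvalues (transpose A ** A)"

definition onb_matrix :: "('s::finite) itself \<Rightarrow> (real^('d::finite)) set \<Rightarrow> real^'s^'d" where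
  "onb_matrix _ V = (SOME P. orthonormal_cols P \<and> col_space P = V)"

definition max_principal_angle :: "('s::finite) itself \<Rightarrow> (real^('d::finite)) set \<Rightarrow> (real^'d) set \<Rightarrow> real" where
  "max_principal_angle S V U =
     arccos (Min (singular_values (transpose (onb_matrix S V) ** onb_matrix S U)))"

definition orth_proj :: "(real^'d) set \<Rightarrow> real^'d \<Rightarrow> real^'d" where
  "orth_proj V x = (THE y. y \<in> V \<and> (\<forall>v\<in>V. (x - y) \<bullet> v = 0))"

definition pos_def_matrix :: "real^'n^'n \<Rightarrow> bool" where
  "pos_def_matrix S \<longleftrightarrow> transpose S = S \<and> (\<forall>x. x \<noteq> 0 \<longrightarrow> x \<bullet> (S *v x) > 0)"

definition mat_sqrt :: "real^'n^'n \<Rightarrow> real^'n^'n" where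
  "mat_sqrt A = (THE S. pos_def_matrix S \<and> S ** S = A)"

definition spec_norm :: "real^'n^'m \<Rightarrow> real" where
  "spec_norm A = onorm (\<lambda>x. A *v x)"

end

theory Submission
  imports Defs
begin

(* Let P and Q(t) have orthonormal columns spanning V(tau) and V(t). The squared singular
   values of P^T Q(t) and of (I - P P^T) Q(t) are complementary (Pythagoras), so the maximal
   principal angle is arcsin ||(I - P P^T) Q(t)||. Now W(t) = W(tau) + (t - tau)(W'(tau) + o(1))
   and I - P P^T annihilates W(tau); since ||W(tau) z|| = ||(W^T W)^(1/2) z||, comparing
   ||W(t) z|| with ||W(tau) z|| traps ||(I - P P^T) Q(t)|| / (t - tau) between two bounds that
   tend to ||(I - P P^T) W'(tau) (W^T W)^(-1/2)||. As arcsin'(0) = 1, this is the right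
   derivative of the angle. The square root of the Gram matrix comes from the spectral theorem
   for symmetric matrices, obtained by minimising the Rayleigh quotient on invariant subspaces. *)

lemma inner_matrix_vector_transpose:
  fixes A :: "real^'n^'m"
  shows "(A *v x) \<bullet> y = x \<bullet> (transpose A *v y)"
  by (metis dot_lmul_matrix inner_commute transpose_matrix_vector)

lemma symmetric_matrix_inner:
  fixes A :: "real^'n^'n"
  assumes "transpose A = A"
  shows "(A *v x) \<bullet> y = x \<bullet> (A *v y)"
  by (metis assms inner_matrix_vector_transpose)

lemma symmetric_matrixI:
  fixes A :: "real^'n^'n"
  assumes "\<And>x y. (A *v x) \<bullet> y = x \<bullet> (A *v y)"
  shows "transpose A = A"
proof -
  have "transpose A *v y = A *v y" for y
    by (metis assms inner_matrix_vector_transpose vector_eq_ldot)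
  then show ?thesis
    by (simp add: matrix_eq)
qed

lemma orthonormal_cols_inner:
  fixes Q :: "real^'s^'d"
  assumes "orthonormal_cols Q"
  shows "(Q *v x) \<bullet> (Q *v y) = x \<bullet> y"
  using assms unfolding orthonormal_cols_def
  by (metis inner_matrix_vector_transpose matrix_vector_mul_assoc matrix_vector_mul_lid)

lemma orthonormal_cols_norm:
  fixes Q :: "real^'s^'d"
  assumes "orthonormal_cols Q"
  shows "norm (Q *v x) = norm x"
  by (metis assms norm_eq_sqrt_inner orthonormal_cols_inner)

section \<open>Symmetric matrices\<close>

lemma quadratic_form_min_imp_eigenvector:
  fixes A :: "real^'n^'n"
  assumes sym: "transpose A = A" and U: "subspace U"
    and nonneg: "\<And>x. x \<in> U \<Longrightarrow> m * (x \<bullet> x) \<le> x \<bullet> (A *v x)"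
    and v: "v \<in> U" and inv: "A *v v \<in> U"
    and attained: "v \<bullet> (A *v v) = m * (v \<bullet> v)"
  shows "A *v v = m *\<^sub>R v"
proof (rule ccontr)
  define w where "w = A *v v - m *\<^sub>R v"
  define q where "q x = x \<bullet> (A *v x) - m * (x \<bullet> x)" for x
  assume "A *v v \<noteq> m *\<^sub>R v"
  then have ww: "w \<bullet> w > 0"
    by (simp add: w_def)
  have w_in: "w \<in> U"
    using U v inv by (simp add: w_def subspace_diff subspace_mul)
  have qw: "q w \<ge> 0"
    using nonneg[OF w_in] by (simp add: q_def)
  \<comment> \<open>moving from \<open>v\<close> a little in direction \<open>-w\<close> would push the quadratic form below \<open>m\<close>\<close>
  define t where "t = (w \<bullet> w) / (q w + 1)"
  have t: "t > 0"
    using ww qw by (simp add: t_def)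
  have "v - t *\<^sub>R w \<in> U"
    using U v w_in by (simp add: subspace_diff subspace_mul)
  then have "q (v - t *\<^sub>R w) \<ge> 0"
    using nonneg by (simp add: q_def)
  moreover have "q (v - t *\<^sub>R w) = q v - 2 * t * (w \<bullet> w) + t\<^sup>2 * q w"
  proof -
    have "v \<bullet> (A *v w) = w \<bullet> (A *v v)"
      by (metis inner_commute symmetric_matrix_inner[OF sym])
    moreover have "w \<bullet> (A *v v) = w \<bullet> w + m * (v \<bullet> w)"
      by (simp add: w_def inner_commute algebra_simps)
    ultimately show ?thesis
      unfolding q_def
      by (simp add: power2_eq_square algebra_simps inner_commute[of w v])
  qed
  moreover have "q v = 0"
    using attained by (simp add: q_def)
  ultimately have "2 * (w \<bullet> w) \<le> t * q w"
    using t by (simp add: power2_eq_square)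
  moreover have "t * q w < w \<bullet> w"
    using ww qw by (simp add: t_def field_simps)
  ultimately show False
    using ww by linarith
qed

lemma symmetric_min_eigenvector_in_subspace:
  fixes A :: "real^'n^'n"
  assumes sym: "transpose A = A" and U: "subspace U" and inv: "\<And>x. x \<in> U \<Longrightarrow> A *v x \<in> U"
    and nontriv: "U \<noteq> {0}"
  obtains v where "v \<in> U" "norm v = 1" "A *v v = (v \<bullet> (A *v v)) *\<^sub>R v"
    "\<And>x. x \<in> U \<Longrightarrow> norm x = 1 \<Longrightarrow> v \<bullet> (A *v v) \<le> x \<bullet> (A *v x)"
proof -
  have cpt: "compact (sphere 0 1 \<inter> U)"
    by (simp add: U closed_subspace compact_Int_closed)
  obtain u where "u \<in> U" "u \<noteq> 0"
    using nontriv U subspace_0 by blast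
  then have "(1 / norm u) *\<^sub>R u \<in> sphere 0 1 \<inter> U"
    using U by (simp add: subspace_mul)
  then have "sphere 0 1 \<inter> U \<noteq> {}"
    by blast
  moreover have "continuous_on (sphere 0 1 \<inter> U) (\<lambda>x. x \<bullet> (A *v x))"
    by (intro continuous_intros)
  ultimately obtain v where v: "v \<in> sphere 0 1 \<inter> U"
    and vmin: "\<And>y. y \<in> sphere 0 1 \<inter> U \<Longrightarrow> v \<bullet> (A *v v) \<le> y \<bullet> (A *v y)"
    using continuous_attains_inf[OF cpt] by blast
  define m where "m = v \<bullet> (A *v v)"
  have "m * (x \<bullet> x) \<le> x \<bullet> (A *v x)" if x: "x \<in> U" for x
  proof (cases "x = 0")
    case False
    then have "(1 / norm x) *\<^sub>R x \<in> sphere 0 1 \<inter> U"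
      using x U by (simp add: subspace_mul)
    then have "m \<le> ((1 / norm x) *\<^sub>R x) \<bullet> (A *v ((1 / norm x) *\<^sub>R x))"
      using vmin m_def by blast
    also have "\<dots> = (x \<bullet> (A *v x)) / (norm x)\<^sup>2"
      by (simp add: matrix_vector_mult_scaleR power2_eq_square)
    finally show ?thesis
      using False by (simp add: field_simps dot_square_norm)
  qed simp
  then have "A *v v = m *\<^sub>R v"
    using v U inv by (intro quadratic_form_min_imp_eigenvector[OF sym U])
      (auto simp: m_def dot_square_norm)
  then show ?thesis
    using that v vmin by (auto simp: m_def)
qed

lemma finite_real_eigenvalues_symmetric:
  fixes A :: "real^'n^'n"
  assumes sym: "transpose A = A"
  shows "finite (real_eigenvalues A)"
proof -
  define E where "E = real_eigenvalues A"
  define ev where "ev l = (SOME v. v \<noteq> 0 \<and> A *v v = l *\<^sub>R v)" for l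
  have ev: "ev l \<noteq> 0 \<and> A *v ev l = l *\<^sub>R ev l" if "l \<in> E" for l
  proof -
    have "\<exists>v. v \<noteq> 0 \<and> A *v v = l *\<^sub>R v"
      using that by (simp add: E_def real_eigenvalues_def scalar_mult_eq_scaleR)
    then show ?thesis
      unfolding ev_def by (rule someI_ex)
  qed
  have "inj_on ev E"
  proof (rule inj_onI)
    fix l k assume l: "l \<in> E" and k: "k \<in> E" and eq: "ev l = ev k"
    have "l *\<^sub>R ev l = k *\<^sub>R ev l"
      using ev[OF l] ev[OF k] eq by metis
    then have "(l - k) *\<^sub>R ev l = 0"
      by (simp add: algebra_simps)
    then show "l = k"
      using ev[OF l] by simp
  qed
  moreover have "pairwise orthogonal (ev ` E)"
  proof (rule pairwiseI, clarify)
    fix l k assume l: "l \<in> E" and k: "k \<in> E" and ne: "ev l \<noteq> ev k"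
    have "(A *v ev l) \<bullet> ev k = ev l \<bullet> (A *v ev k)"
      by (rule symmetric_matrix_inner[OF sym])
    then have "l * (ev l \<bullet> ev k) = k * (ev l \<bullet> ev k)"
      using ev[OF l] ev[OF k] by simp
    moreover have "l \<noteq> k"
      using ne by auto
    ultimately show "orthogonal (ev l) (ev k)"
      by (simp add: orthogonal_def)
  qed
  moreover have "0 \<notin> ev ` E"
    using ev by auto
  ultimately have "finite (ev ` E)"
    using pairwise_orthogonal_independent finiteI_independent by blast
  with \<open>inj_on ev E\<close> show ?thesis
    unfolding E_def by (blast dest: finite_imageD)
qed

lemma Min_real_eigenvalues_symmetric:
  fixes A :: "real^'n^'n"
  assumes sym: "transpose A = A"
  obtains v where "norm v = 1" "Min (real_eigenvalues A) = v \<bullet> (A *v v)"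
    "\<And>x. norm x = 1 \<Longrightarrow> v \<bullet> (A *v v) \<le> x \<bullet> (A *v x)" "real_eigenvalues A \<noteq> {}"
proof -
  have "axis undefined 1 \<noteq> (0 :: real^'n)"
    by simp
  then have "(UNIV :: (real^'n) set) \<noteq> {0}"
    by blast
  then obtain v where "v \<in> UNIV" and v: "norm v = 1" "A *v v = (v \<bullet> (A *v v)) *\<^sub>R v"
    and vmin: "\<And>x. x \<in> UNIV \<Longrightarrow> norm x = 1 \<Longrightarrow> v \<bullet> (A *v v) \<le> x \<bullet> (A *v x)"
    by (rule symmetric_min_eigenvector_in_subspace[OF sym subspace_UNIV UNIV_I]) blast
  then have mem: "v \<bullet> (A *v v) \<in> real_eigenvalues A"
    unfolding real_eigenvalues_def scalar_mult_eq_scaleR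
    by (intro CollectI exI[of _ v]) auto
  have "v \<bullet> (A *v v) \<le> l" if "l \<in> real_eigenvalues A" for l
  proof -
    have "\<exists>u. u \<noteq> 0 \<and> A *v u = l *\<^sub>R u"
      using that by (simp add: real_eigenvalues_def scalar_mult_eq_scaleR)
    then obtain u where u: "u \<noteq> 0" "A *v u = l *\<^sub>R u"
      by blast
    have "v \<bullet> (A *v v) \<le> ((1 / norm u) *\<^sub>R u) \<bullet> (A *v ((1 / norm u) *\<^sub>R u))"
      using u by (intro vmin) auto
    also have "\<dots> = l"
      using u by (simp add: matrix_vector_mult_scaleR dot_square_norm power2_eq_square)
    finally show ?thesis .
  qed
  then have "Min (real_eigenvalues A) = v \<bullet> (A *v v)"
    using Min_eqI[OF finite_real_eigenvalues_symmetric[OF sym] _ mem] by blast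
  then show ?thesis
    using that v vmin mem by auto
qed

lemma span_insert_orthogonal_complement:
  assumes U: "subspace U" and v: "v \<in> U" "norm v = 1"
    and B: "span B = {x \<in> U. v \<bullet> x = 0}"
  shows "span (insert v B) = U"
proof
  show "span (insert v B) \<subseteq> U"
    using U v span_minimal[of "insert v B" U] B span_superset[of B] by blast
  show "U \<subseteq> span (insert v B)"
  proof
    fix x assume x: "x \<in> U"
    have "x - (v \<bullet> x) *\<^sub>R v \<in> span B"
      using x v U by (simp add: B subspace_diff subspace_mul inner_diff_right dot_square_norm)
    then have "x - (v \<bullet> x) *\<^sub>R v \<in> span (insert v B)"
      by (meson span_mono subset_insertI subsetD)
    moreover have "(v \<bullet> x) *\<^sub>R v \<in> span (insert v B)"
      by (simp add: span_base span_mul)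
    ultimately show "x \<in> span (insert v B)"
      using span_add by fastforce
  qed
qed

lemma symmetric_eigenvector_orthogonal_invariant:
  fixes A :: "real^'n^'n"
  assumes "transpose A = A" "A *v v = \<mu> *\<^sub>R v" "v \<bullet> x = 0"
  shows "v \<bullet> (A *v x) = 0"
  by (metis assms inner_scaleR_left mult_zero_right symmetric_matrix_inner)

lemma dim_orthogonal_complement_less:
  fixes U :: "'a::euclidean_space set"
  assumes "subspace U" "v \<in> U" "v \<noteq> 0"
  shows "dim {x \<in> U. v \<bullet> x = 0} < dim U"
proof (rule dim_psubset)
  have "subspace {x \<in> U. v \<bullet> x = 0}"
    using assms(1) by (auto simp: subspace_def inner_add_right)
  moreover have "v \<notin> {x \<in> U. v \<bullet> x = 0}"
    using assms(3) by simp
  then have "{x \<in> U. v \<bullet> x = 0} \<subset> U"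
    using assms(2) by blast
  ultimately show "span {x \<in> U. v \<bullet> x = 0} \<subset> span U"
    using assms(1) by (metis span_eq_iff)
qed

lemma symmetric_eigenbasis_of_invariant_subspace:
  fixes A :: "real^'n^'n"
  assumes sym: "transpose A = A"
  shows "subspace U \<Longrightarrow> (\<And>x. x \<in> U \<Longrightarrow> A *v x \<in> U) \<Longrightarrow>
    \<exists>B. finite B \<and> B \<subseteq> U \<and> pairwise orthogonal B \<and>
        (\<forall>b\<in>B. norm b = 1 \<and> A *v b = (b \<bullet> (A *v b)) *\<^sub>R b) \<and> span B = U"
proof (induction "dim U" arbitrary: U rule: less_induct)
  case less
  show ?case
  proof (cases "U = {0}")
    case True
    then show ?thesis
      by (intro exI[of _ "{}"]) auto
  next
    case False
    then obtain v where v: "v \<in> U" "norm v = 1" "A *v v = (v \<bullet> (A *v v)) *\<^sub>R v"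
      using symmetric_min_eigenvector_in_subspace[OF sym less.prems] by blast
    define U' where "U' = {x \<in> U. v \<bullet> x = 0}"
    have "subspace U'"
      using less.prems(1) by (auto simp: U'_def subspace_def inner_add_right)
    moreover have "A *v x \<in> U'" if "x \<in> U'" for x
      using that less.prems(2) symmetric_eigenvector_orthogonal_invariant[OF sym v(3)]
      by (simp add: U'_def)
    moreover have "dim U' < dim U"
      unfolding U'_def using less.prems(1) v by (intro dim_orthogonal_complement_less) auto
    ultimately obtain B where B: "finite B" "B \<subseteq> U'" "pairwise orthogonal B"
        "\<forall>b\<in>B. norm b = 1 \<and> A *v b = (b \<bullet> (A *v b)) *\<^sub>R b" "span B = U'"
      using less.hyps by blast
    show ?thesis
    proof (intro exI[of _ "insert v B"] conjI)
      show "pairwise orthogonal (insert v B)"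
        using B(2,3) by (auto simp: pairwise_insert U'_def orthogonal_def inner_commute)
      show "span (insert v B) = U"
        using span_insert_orthogonal_complement[OF less.prems(1) v(1,2)] B(5) by (simp add: U'_def)
    qed (use B v U'_def in auto)
  qed
qed

lemma inner_sum_orthonormal:
  assumes "finite B" "pairwise orthogonal B" "\<forall>b\<in>B. norm b = 1" "c \<in> B"
  shows "c \<bullet> (\<Sum>b\<in>B. u b *\<^sub>R b) = u c"
proof -
  have "c \<bullet> (\<Sum>b\<in>B. u b *\<^sub>R b) = (\<Sum>b\<in>B. u b * (c \<bullet> b))"
    by (simp add: inner_sum_right)
  also have "\<dots> = (\<Sum>b\<in>{c}. u b * (c \<bullet> b))"
    by (rule sum.mono_neutral_right) (use assms in \<open>auto simp: pairwise_def orthogonal_def\<close>)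
  also have "\<dots> = u c"
    using assms by (simp add: dot_square_norm)
  finally show ?thesis .
qed

lemma orthonormal_expansion:
  assumes B: "finite B" "pairwise orthogonal B" "\<forall>b\<in>B. norm b = 1" and x: "x \<in> span B"
  shows "x = (\<Sum>b\<in>B. (b \<bullet> x) *\<^sub>R b)"
proof -
  obtain u where u: "x = (\<Sum>b\<in>B. u b *\<^sub>R b)"
    using x span_finite[OF B(1)] by auto
  then have "b \<bullet> x = u b" if "b \<in> B" for b
    using inner_sum_orthonormal[OF B that] by simp
  then show ?thesis
    using u by (metis (no_types, lifting) sum.cong)
qed

lemma symmetric_orthonormal_eigenbasis:
  fixes A :: "real^'n^'n"
  assumes "transpose A = A"
  obtains B and \<mu> :: "real^'n \<Rightarrow> real"
  where "finite B" "pairwise orthogonal B" "\<forall>b\<in>B. norm b = 1"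
    "\<And>b. b \<in> B \<Longrightarrow> A *v b = \<mu> b *\<^sub>R b" "\<And>x. x = (\<Sum>b\<in>B. (b \<bullet> x) *\<^sub>R b)"
proof -
  obtain B where B: "finite B" "pairwise orthogonal B" "\<forall>b\<in>B. norm b = 1"
     "\<forall>b\<in>B. A *v b = (b \<bullet> (A *v b)) *\<^sub>R b" "span B = UNIV"
    using symmetric_eigenbasis_of_invariant_subspace[OF assms subspace_UNIV] by blast
  then show ?thesis
    using that[of B "\<lambda>b. b \<bullet> (A *v b)"] orthonormal_expansion[OF B(1-3)] by auto
qed

section \<open>Positive definite square roots\<close>

lemma orthonormal_expansion_weighted_square_sum_pos:
  assumes "finite B" and expand: "\<And>x. x = (\<Sum>b\<in>B. (b \<bullet> x) *\<^sub>R b)"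
    and pos: "\<And>b. b \<in> B \<Longrightarrow> 0 < w b" and "x \<noteq> 0"
  shows "0 < (\<Sum>b\<in>B. w b * (b \<bullet> x) * (b \<bullet> x))"
proof -
  have "\<exists>b\<in>B. b \<bullet> x \<noteq> 0"
  proof (rule ccontr)
    assume "\<not> (\<exists>b\<in>B. b \<bullet> x \<noteq> 0)"
    then have "(\<Sum>b\<in>B. (b \<bullet> x) *\<^sub>R b) = 0"
      by simp
    then show False
      using expand[of x] \<open>x \<noteq> 0\<close> by simp
  qed
  then obtain b\<^sub>0 where b\<^sub>0: "b\<^sub>0 \<in> B" "b\<^sub>0 \<bullet> x \<noteq> 0"
    by blast
  show ?thesis
  proof (rule sum_pos2[OF assms(1) b\<^sub>0(1)])
    have "0 < (b\<^sub>0 \<bullet> x) * (b\<^sub>0 \<bullet> x)"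
      using b\<^sub>0(2) by (metis not_real_square_gt_zero)
    then show "0 < w b\<^sub>0 * (b\<^sub>0 \<bullet> x) * (b\<^sub>0 \<bullet> x)"
      using pos[OF b\<^sub>0(1)] by (metis mult.assoc mult_pos_pos)
    show "0 \<le> w b * (b \<bullet> x) * (b \<bullet> x)" if "b \<in> B" for b
      using pos[OF that] by (simp add: mult.assoc)
  qed
qed

lemma orthonormal_diagonal_operator:
  fixes B :: "(real^'n) set" and w :: "real^'n \<Rightarrow> real"
  assumes B: "finite B" "pairwise orthogonal B" "\<forall>b\<in>B. norm b = 1"
  defines "f \<equiv> \<lambda>x. \<Sum>b\<in>B. (w b * (b \<bullet> x)) *\<^sub>R b"
  shows "transpose (matrix f) = matrix f"
    and "x \<bullet> (matrix f *v x) = (\<Sum>b\<in>B. w b * (b \<bullet> x) * (b \<bullet> x))"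
    and "(matrix f ** matrix f) *v x = (\<Sum>b\<in>B. (w b * w b * (b \<bullet> x)) *\<^sub>R b)"
proof -
  have "linear f"
    unfolding linear_iff f_def by (simp add: sum.distrib scaleR_sum_right algebra_simps)
  then have Mf: "matrix f *v x = f x" for x
    by (simp add: matrix_works)
  have f_inner: "f x \<bullet> y = (\<Sum>b\<in>B. w b * (b \<bullet> x) * (b \<bullet> y))" for x y
    by (simp add: f_def inner_sum_left)
  show "transpose (matrix f) = matrix f"
    by (rule symmetric_matrixI)
      (simp add: Mf f_inner inner_commute[of _ "f _"] mult.commute mult.left_commute)
  show "x \<bullet> (matrix f *v x) = (\<Sum>b\<in>B. w b * (b \<bullet> x) * (b \<bullet> x))"
    by (simp add: Mf f_inner inner_commute[of x])
  have "(matrix f ** matrix f) *v x = f (f x)"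
    by (simp add: Mf flip: matrix_vector_mul_assoc)
  also have "\<dots> = (\<Sum>b\<in>B. (w b * w b * (b \<bullet> x)) *\<^sub>R b)"
    unfolding f_def by (intro sum.cong refl) (simp add: inner_sum_orthonormal[OF B] mult.assoc)
  finally show "(matrix f ** matrix f) *v x = (\<Sum>b\<in>B. (w b * w b * (b \<bullet> x)) *\<^sub>R b)" .
qed

text \<open>The square root is \<open>\<Sum>\<^sub>b \<surd>\<lambda>\<^sub>b b b\<^sup>T\<close> for an orthonormal eigenbasis \<open>B\<close> of \<open>G\<close>.\<close>

lemma pos_def_sqrt_exists:
  fixes G :: "real^'n^'n"
  assumes sym: "transpose G = G" and pd: "\<And>x. x \<noteq> 0 \<Longrightarrow> x \<bullet> (G *v x) > 0"
  shows "\<exists>S. pos_def_matrix S \<and> S ** S = G"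
proof -
  obtain B lam where B: "finite B" "pairwise orthogonal B" "\<forall>b\<in>B. norm b = 1"
     and Gb: "\<And>b. b \<in> B \<Longrightarrow> G *v b = lam b *\<^sub>R b"
     and expand: "\<And>x. x = (\<Sum>b\<in>B. (b \<bullet> x) *\<^sub>R b)"
    using symmetric_orthonormal_eigenbasis[OF sym] by blast
  have lam_pos: "lam b > 0" if "b \<in> B" for b
  proof -
    have "b \<noteq> 0"
      using B(3) that by auto
    then have "0 < b \<bullet> (G *v b)"
      by (rule pd)
    then show ?thesis
      using B(3) that by (simp add: Gb dot_square_norm)
  qed
  define S where "S = matrix (\<lambda>x. \<Sum>b\<in>B. (sqrt (lam b) * (b \<bullet> x)) *\<^sub>R b)"
  note S = orthonormal_diagonal_operator[OF B, where w = "\<lambda>b. sqrt (lam b)", folded S_def]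
  have "x \<bullet> (S *v x) > 0" if "x \<noteq> 0" for x
    unfolding S(2)
    by (rule orthonormal_expansion_weighted_square_sum_pos[OF B(1) expand _ that]) (simp add: lam_pos)
  moreover have "S ** S = G"
  proof (subst matrix_eq, intro allI)
    fix x
    have "(S ** S) *v x = (\<Sum>b\<in>B. (b \<bullet> x) *\<^sub>R (G *v b))"
      unfolding S(3) using lam_pos by (intro sum.cong) (auto simp: Gb less_imp_le)
    also have "\<dots> = G *v x"
      by (subst (2) expand[of x]) (simp add: linear_sum matrix_vector_mult_scaleR)
    finally show "(S ** S) *v x = G *v x" .
  qed
  ultimately show ?thesis
    using S(1) unfolding pos_def_matrix_def by blast
qed

lemma pos_def_sqrt_unique:
  fixes S R :: "real^'n^'n"
  assumes S: "pos_def_matrix S" and R: "pos_def_matrix R" and eq: "S ** S = R ** R"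
  shows "S = R"
proof -
  define D where "D = S - R"
  have symS: "transpose S = S" and symR: "transpose R = R"
    using S R by (simp_all add: pos_def_matrix_def)
  then have symD: "transpose D = D"
    unfolding D_def
    by (intro symmetric_matrixI) (simp add: matrix_vector_mult_diff_rdistrib inner_diff_left
        inner_diff_right symmetric_matrix_inner)
  obtain B \<mu> where B: "finite B" "pairwise orthogonal B" "\<forall>b\<in>B. norm b = 1"
     and Db: "\<And>b. b \<in> B \<Longrightarrow> D *v b = \<mu> b *\<^sub>R b"
     and expand: "\<And>x. x = (\<Sum>b\<in>B. (b \<bullet> x) *\<^sub>R b)"
    using symmetric_orthonormal_eigenbasis[OF symD] by blast
  \<comment> \<open>\<open>S D + D R = S\<^sup>2 - R\<^sup>2 = 0\<close> forces every eigenvalue \<open>\<mu> b\<close> of \<open>D\<close> to satisfy \<open>\<mu> b (b\<cdot>Sb + b\<cdot>Rb) = 0\<close>\<close>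
  have "D *v b = 0" if b: "b \<in> B" for b
  proof -
    have "S *v (D *v b) + D *v (R *v b) = (S ** S) *v b - (R ** R) *v b"
      by (simp add: D_def matrix_vector_mult_diff_rdistrib matrix_vector_mult_diff_distrib
          flip: matrix_vector_mul_assoc)
    then have "b \<bullet> (S *v (D *v b)) + b \<bullet> (D *v (R *v b)) = 0"
      using eq by (metis inner_add_right inner_zero_right right_minus_eq)
    moreover have "b \<bullet> (D *v (R *v b)) = (D *v b) \<bullet> (R *v b)"
      by (simp add: symmetric_matrix_inner[OF symD])
    ultimately have "b \<bullet> (S *v (D *v b)) + (D *v b) \<bullet> (R *v b) = 0"
      by simp
    then have "\<mu> b * (b \<bullet> (S *v b) + b \<bullet> (R *v b)) = 0"
      using Db[OF b] by (simp add: algebra_simps)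
    moreover have "b \<noteq> 0"
      using B(3) b by auto
    then have "b \<bullet> (S *v b) > 0" "b \<bullet> (R *v b) > 0"
      using S R unfolding pos_def_matrix_def by auto
    ultimately show ?thesis
      using Db[OF b] by (simp add: add_pos_pos)
  qed
  then have "D *v x = 0" for x
    by (subst expand[of x]) (simp add: linear_sum matrix_vector_mult_scaleR)
  then show ?thesis
    by (simp add: D_def matrix_eq matrix_vector_mult_diff_rdistrib)
qed

lemma mat_sqrt:
  fixes G :: "real^'n^'n"
  assumes "transpose G = G" and "\<And>x. x \<noteq> 0 \<Longrightarrow> x \<bullet> (G *v x) > 0"
  shows "pos_def_matrix (mat_sqrt G)" "mat_sqrt G ** mat_sqrt G = G"
proof -
  obtain S where "pos_def_matrix S \<and> S ** S = G"
    using pos_def_sqrt_exists[OF assms] by blast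
  then have "\<exists>!S. pos_def_matrix S \<and> S ** S = G"
    using pos_def_sqrt_unique by (intro ex1I) auto
  then have "pos_def_matrix (mat_sqrt G) \<and> mat_sqrt G ** mat_sqrt G = G"
    unfolding mat_sqrt_def by (rule theI')
  then show "pos_def_matrix (mat_sqrt G)" "mat_sqrt G ** mat_sqrt G = G"
    by auto
qed

section \<open>Orthonormalising the columns of a full-rank matrix\<close>

lemma matrix_inv_invertible:
  fixes A :: "real^'n^'n"
  assumes "invertible A"
  shows "A ** matrix_inv A = mat 1" "matrix_inv A ** A = mat 1"
proof -
  have "A ** matrix_inv A = mat 1 \<and> matrix_inv A ** A = mat 1"
    using assms unfolding matrix_inv_def invertible_def by (rule someI_ex)
  then show "A ** matrix_inv A = mat 1" "matrix_inv A ** A = mat 1"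
    by auto
qed

lemma col_space_mult_invertible:
  fixes W :: "real^'s^'d" and K :: "real^'s^'s"
  assumes "invertible K"
  shows "col_space (W ** K) = col_space W"
proof -
  obtain K' where "K ** K' = mat 1"
    using assms invertible_right_inverse by blast
  then have "W *v z = (W ** K) *v (K' *v z)" for z
    by (simp add: matrix_vector_mul_assoc flip: matrix_mul_assoc)
  then show ?thesis
    unfolding col_space_def by (auto simp flip: matrix_vector_mul_assoc)
qed

context
  fixes W :: "real^'s^'d"
  assumes inj: "inj ((*v) W)"
begin

lemma gram_pos_def:
  "transpose (transpose W ** W) = transpose W ** W"
  "x \<noteq> 0 \<Longrightarrow> x \<bullet> ((transpose W ** W) *v x) > 0"
proof -
  show "transpose (transpose W ** W) = transpose W ** W"
    by (simp add: matrix_transpose_mul)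
  assume "x \<noteq> 0"
  then have "W *v x \<noteq> 0"
    using inj by (metis injD matrix_vector_mult_0_right)
  moreover have "x \<bullet> ((transpose W ** W) *v x) = (W *v x) \<bullet> (W *v x)"
    by (simp add: inner_matrix_vector_transpose flip: matrix_vector_mul_assoc)
  ultimately show "x \<bullet> ((transpose W ** W) *v x) > 0"
    by simp
qed

lemma norm_gram_sqrt:
  "norm (mat_sqrt (transpose W ** W) *v z) = norm (W *v z)"
proof -
  define S where "S = mat_sqrt (transpose W ** W)"
  have "transpose S = S" "S ** S = transpose W ** W"
    using mat_sqrt[OF gram_pos_def] by (auto simp: S_def pos_def_matrix_def)
  have "(S *v z) \<bullet> (S *v z) = z \<bullet> ((S ** S) *v z)"
    by (simp add: symmetric_matrix_inner[OF \<open>transpose S = S\<close>] flip: matrix_vector_mul_assoc)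
  also have "\<dots> = (W *v z) \<bullet> (W *v z)"
    by (simp add: \<open>S ** S = transpose W ** W\<close> inner_matrix_vector_transpose
        flip: matrix_vector_mul_assoc)
  finally show ?thesis
    by (simp add: S_def norm_eq_sqrt_inner)
qed

lemma invertible_gram_sqrt: "invertible (mat_sqrt (transpose W ** W))"
proof -
  have "inj ((*v) (mat_sqrt (transpose W ** W)))"
  proof (rule injI)
    fix x y
    assume eq: "mat_sqrt (transpose W ** W) *v x = mat_sqrt (transpose W ** W) *v y"
    have "norm (W *v (x - y)) = norm (mat_sqrt (transpose W ** W) *v (x - y))"
      by (simp only: norm_gram_sqrt)
    then have "W *v x = W *v y"
      using eq by (simp add: matrix_vector_mult_diff_distrib)
    with inj show "x = y"
      by (rule injD)
  qed
  then show ?thesis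
    using matrix_left_invertible_injective invertible_left_inverse by blast
qed

lemma invertible_inv_gram_sqrt: "invertible (matrix_inv (mat_sqrt (transpose W ** W)))"
  using matrix_inv_invertible(1)[OF invertible_gram_sqrt] invertible_left_inverse by blast

lemma orthonormal_cols_gram_normalize:
  "orthonormal_cols (W ** matrix_inv (mat_sqrt (transpose W ** W)))"
proof -
  define S where "S = mat_sqrt (transpose W ** W)"
  define K where "K = matrix_inv S"
  have S: "transpose S = S" "S ** S = transpose W ** W"
    using mat_sqrt[OF gram_pos_def] by (auto simp: S_def pos_def_matrix_def)
  have SK: "S ** K = mat 1"
    using matrix_inv_invertible invertible_gram_sqrt by (simp add: K_def S_def)
  then have KtS: "transpose K ** S = mat 1"
    by (metis S(1) matrix_transpose_mul transpose_mat)
  have "transpose (W ** K) ** (W ** K) = transpose K ** (transpose W ** W) ** K"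
    by (simp add: matrix_transpose_mul matrix_mul_assoc)
  also have "\<dots> = (transpose K ** S) ** (S ** K)"
    by (simp add: S(2)[symmetric] matrix_mul_assoc)
  finally have "transpose (W ** K) ** (W ** K) = mat 1"
    by (simp add: KtS SK)
  then show ?thesis
    by (simp add: orthonormal_cols_def K_def S_def)
qed

lemma onb_matrix_col_space:
  "orthonormal_cols (onb_matrix TYPE('s) (col_space W))"
  "col_space (onb_matrix TYPE('s) (col_space W)) = col_space W"
proof -
  have "\<exists>P :: real^'s^'d. orthonormal_cols P \<and> col_space P = col_space W"
    using orthonormal_cols_gram_normalize col_space_mult_invertible[OF invertible_inv_gram_sqrt]
    by blast
  then have "orthonormal_cols (onb_matrix TYPE('s) (col_space W)) \<and>
      col_space (onb_matrix TYPE('s) (col_space W)) = col_space W"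
    unfolding onb_matrix_def by (rule someI_ex)
  then show "orthonormal_cols (onb_matrix TYPE('s) (col_space W))"
    "col_space (onb_matrix TYPE('s) (col_space W)) = col_space W"
    by auto
qed

end

section \<open>Spectral norm\<close>

lemma norm_le_spec_norm: "norm (A *v x) \<le> spec_norm A * norm x"
  unfolding spec_norm_def by (rule onorm) simp

lemma spec_norm_nonneg: "0 \<le> spec_norm A"
  unfolding spec_norm_def by (rule onorm_pos_le) simp

lemma spec_norm_le: "(\<And>x. norm (A *v x) \<le> b * norm x) \<Longrightarrow> spec_norm A \<le> b"
  unfolding spec_norm_def by (rule onorm_le)

lemma spec_norm_eqI:
  assumes "norm v = 1" and max: "\<And>y. norm y = 1 \<Longrightarrow> norm (A *v y) \<le> norm (A *v v)"
  shows "spec_norm A = norm (A *v v)"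
proof (rule antisym)
  show "spec_norm A \<le> norm (A *v v)"
  proof (rule spec_norm_le)
    fix y :: "real^'a"
    show "norm (A *v y) \<le> norm (A *v v) * norm y"
    proof (cases "y = 0")
      case False
      then have "norm (A *v ((1 / norm y) *\<^sub>R y)) \<le> norm (A *v v)"
        by (intro max) simp
      then show ?thesis
        using False by (simp add: matrix_vector_mult_scaleR field_simps)
    qed simp
  qed
  show "norm (A *v v) \<le> spec_norm A"
    using norm_le_spec_norm[of A v] assms(1) by simp
qed

lemma tendsto_spec_norm_zero:
  fixes A :: "'a \<Rightarrow> real^'n^'m"
  assumes "(A \<longlongrightarrow> 0) F"
  shows "((\<lambda>t. spec_norm (A t)) \<longlongrightarrow> 0) F"
proof -
  define entry_sum where "entry_sum t = (\<Sum>i\<in>UNIV. \<Sum>j\<in>UNIV. \<bar>A t $ i $ j\<bar>)" for t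
  have "(entry_sum \<longlongrightarrow> (\<Sum>i\<in>UNIV. \<Sum>j\<in>UNIV. \<bar>(0::real^'n^'m) $ i $ j\<bar>)) F"
    unfolding entry_sum_def by (intro tendsto_intros assms)
  then have "(entry_sum \<longlongrightarrow> 0) F"
    by simp
  moreover have "\<forall>\<^sub>F t in F. spec_norm (A t) \<le> entry_sum t"
    by (simp add: entry_sum_def spec_norm_def onorm_le_matrix_component_sum)
  moreover have "\<forall>\<^sub>F t in F. 0 \<le> spec_norm (A t)"
    by (simp add: spec_norm_nonneg)
  ultimately show ?thesis
    using real_tendsto_sandwich[of "\<lambda>_. 0" "\<lambda>t. spec_norm (A t)" F entry_sum 0] by simp
qed

section \<open>Principal angles and orthogonal projections\<close>

lemma orthonormal_cols_pythagoras:
  fixes P :: "real^'s^'d"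
  assumes P: "orthonormal_cols P"
  shows "(norm (transpose P *v x))\<^sup>2 + (norm (x - P *v (transpose P *v x)))\<^sup>2 = (norm x)\<^sup>2"
proof -
  define u where "u = transpose P *v x"
  have "x \<bullet> (P *v u) = u \<bullet> u"
    unfolding u_def by (subst inner_matrix_vector_transpose) (simp only: transpose_transpose)
  then have "(norm (x - P *v u))\<^sup>2 = x \<bullet> x - u \<bullet> u"
    by (simp add: power2_norm_eq_inner inner_diff_left inner_diff_right inner_commute
        orthonormal_cols_inner[OF P])
  then show ?thesis
    by (simp add: u_def power2_norm_eq_inner)
qed

lemma Min_eigenvalue_gram_complementary:
  fixes A :: "real^'n^'m" and M :: "real^'n^'k"
  assumes split: "\<And>y. (norm (A *v y))\<^sup>2 + (norm (M *v y))\<^sup>2 = (norm y)\<^sup>2"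
  shows "Min (real_eigenvalues (transpose A ** A)) = 1 - (spec_norm M)\<^sup>2"
proof -
  define C where "C = transpose A ** A"
  have Cy: "y \<bullet> (C *v y) = (norm (A *v y))\<^sup>2" for y
    by (simp add: C_def inner_matrix_vector_transpose power2_norm_eq_inner
        flip: matrix_vector_mul_assoc)
  have "transpose C = C"
    by (simp add: C_def matrix_transpose_mul)
  then obtain v where v: "norm v = 1" "Min (real_eigenvalues C) = v \<bullet> (C *v v)"
    and vmin: "\<And>y. norm y = 1 \<Longrightarrow> v \<bullet> (C *v v) \<le> y \<bullet> (C *v y)"
    using Min_real_eigenvalues_symmetric by blast
  have v_split: "(norm (A *v v))\<^sup>2 + (norm (M *v v))\<^sup>2 = 1"
    using split[of v] v(1) by simp
  \<comment> \<open>minimising \<open>\<bar>Ay\<bar>\<^sup>2\<close> on the unit sphere is maximising \<open>\<bar>My\<bar>\<^sup>2 = 1 - \<bar>Ay\<bar>\<^sup>2\<close>\<close>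
  have "spec_norm M = norm (M *v v)"
  proof (rule spec_norm_eqI[OF v(1)])
    fix y :: "real^'n"
    assume y: "norm y = 1"
    have "(norm (A *v v))\<^sup>2 \<le> (norm (A *v y))\<^sup>2"
      using vmin[OF y] unfolding Cy .
    moreover have "(norm (A *v y))\<^sup>2 + (norm (M *v y))\<^sup>2 = 1"
      using split[of y] y by simp
    ultimately have "(norm (M *v y))\<^sup>2 \<le> (norm (M *v v))\<^sup>2"
      using v_split by linarith
    then show "norm (M *v y) \<le> norm (M *v v)"
      by simp
  qed
  moreover have "Min (real_eigenvalues C) = (norm (A *v v))\<^sup>2"
    using v(2) by (simp add: Cy)
  ultimately show ?thesis
    using v_split by (simp add: C_def)
qed

lemma Min_singular_values_orthonormal:
  fixes P Q :: "real^'s^'d"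
  assumes P: "orthonormal_cols P" and Q: "orthonormal_cols Q"
  defines "M \<equiv> (mat 1 - P ** transpose P) ** Q"
  shows "Min (singular_values (transpose P ** Q)) = sqrt (1 - (spec_norm M)\<^sup>2)"
    and "spec_norm M \<le> 1"
proof -
  define A where "A = transpose P ** Q"
  have split: "(norm (A *v y))\<^sup>2 + (norm (M *v y))\<^sup>2 = (norm y)\<^sup>2" for y
    using orthonormal_cols_pythagoras[OF P, of "Q *v y"] orthonormal_cols_norm[OF Q]
    by (simp add: A_def M_def matrix_vector_mult_diff_rdistrib flip: matrix_vector_mul_assoc)
  show "spec_norm M \<le> 1"
  proof (rule spec_norm_le)
    fix y
    have "(norm (M *v y))\<^sup>2 \<le> (norm y)\<^sup>2"
      using split[of y] zero_le_power2[of "norm (A *v y)"] by linarith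
    then show "norm (M *v y) \<le> 1 * norm y"
      by simp
  qed
  have "transpose (transpose A ** A) = transpose A ** A"
    by (simp add: matrix_transpose_mul)
  then have "real_eigenvalues (transpose A ** A) \<noteq> {}"
    using Min_real_eigenvalues_symmetric by blast
  moreover have "mono sqrt"
    by (rule monoI) simp
  ultimately have "Min (singular_values A) = sqrt (Min (real_eigenvalues (transpose A ** A)))"
    unfolding singular_values_def
    using finite_real_eigenvalues_symmetric[OF \<open>transpose (transpose A ** A) = _\<close>]
    by (simp add: mono_Min_commute)
  then show "Min (singular_values (transpose P ** Q)) = sqrt (1 - (spec_norm M)\<^sup>2)"
    by (simp add: A_def[symmetric] Min_eigenvalue_gram_complementary[OF split])
qed

lemma arccos_Min_singular_values_orthonormal:
  fixes P Q :: "real^'s^'d"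
  assumes "orthonormal_cols P" and "orthonormal_cols Q"
  shows "arccos (Min (singular_values (transpose P ** Q))) =
    arcsin (spec_norm ((mat 1 - P ** transpose P) ** Q))"
proof -
  define \<nu> where "\<nu> = spec_norm ((mat 1 - P ** transpose P) ** Q)"
  have \<nu>: "0 \<le> \<nu>" "\<nu> \<le> 1"
    using Min_singular_values_orthonormal(2)[OF assms] spec_norm_nonneg by (auto simp: \<nu>_def)
  have "arccos (Min (singular_values (transpose P ** Q))) = arccos (cos (arcsin \<nu>))"
    using Min_singular_values_orthonormal(1)[OF assms] \<nu> by (simp add: \<nu>_def cos_arcsin)
  also have "\<dots> = arcsin \<nu>"
    using \<nu> arcsin_nonneg[of \<nu>] arcsin_ubound[of \<nu>] pi_gt_zero by (intro arccos_cos) auto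
  finally show ?thesis
    by (simp add: \<nu>_def)
qed

lemma orth_proj_col_space:
  fixes P :: "real^'s^'d"
  assumes P: "orthonormal_cols P"
  shows "orth_proj (col_space P) x = P *v (transpose P *v x)"
  unfolding orth_proj_def
proof (rule the_equality)
  define p where "p = P *v (transpose P *v x)"
  have orth: "(x - p) \<bullet> v = 0" if v: "v \<in> col_space P" for v
  proof -
    obtain z where z: "v = P *v z"
      using v unfolding col_space_def by blast
    have "(transpose P *v x) \<bullet> z = x \<bullet> (P *v z)"
      by (subst inner_matrix_vector_transpose) (simp only: transpose_transpose)
    then show ?thesis
      by (simp add: z p_def inner_diff_left orthonormal_cols_inner[OF P])
  qed
  show "p \<in> col_space P \<and> (\<forall>v\<in>col_space P. (x - p) \<bullet> v = 0)"
    using orth by (auto simp: p_def col_space_def)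
  fix y assume y: "y \<in> col_space P \<and> (\<forall>v\<in>col_space P. (x - y) \<bullet> v = 0)"
  have "y - p \<in> col_space P"
    using y unfolding col_space_def p_def by (auto simp flip: matrix_vector_mult_diff_distrib)
  then have "(x - y) \<bullet> (y - p) = 0" "(x - p) \<bullet> (y - p) = 0"
    using y orth by auto
  moreover have "(y - p) \<bullet> (y - p) = (x - p) \<bullet> (y - p) - (x - y) \<bullet> (y - p)"
    by (simp add: inner_diff_left)
  ultimately show "y = p"
    by simp
qed

lemma orth_proj_col_space_matrix:
  fixes P :: "real^'s^'d"
  assumes "orthonormal_cols P"
  shows "(\<chi> i j. orth_proj (col_space P) (axis j 1) $ i) = P ** transpose P"
proof -
  have "(\<chi> i j. orth_proj (col_space P) (axis j 1) $ i) = matrix (\<lambda>x. (P ** transpose P) *v x)"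
    unfolding matrix_def orth_proj_col_space[OF assms] matrix_vector_mul_assoc ..
  then show ?thesis
    by simp
qed

section \<open>First-order perturbation of the orthogonal complement\<close>

lemma norm_le_spec_norm_mult_onb:
  fixes Q A :: "real^'s^'d" and M :: "real^'d^'k"
  assumes "orthonormal_cols Q" "col_space Q = col_space A"
  shows "norm (M *v (A *v z)) \<le> spec_norm (M ** Q) * norm (A *v z)"
proof -
  obtain y where y: "A *v z = Q *v y"
    using assms(2) unfolding col_space_def by (metis rangeE rangeI)
  then have "norm (M *v (A *v z)) = norm ((M ** Q) *v y)"
    by (simp add: matrix_vector_mul_assoc)
  also have "\<dots> \<le> spec_norm (M ** Q) * norm y"
    by (rule norm_le_spec_norm)
  finally show ?thesis
    by (simp add: y orthonormal_cols_norm[OF assms(1)])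
qed

lemma spec_norm_mult_onb_le:
  fixes Q A :: "real^'s^'d" and M :: "real^'d^'k"
  assumes "orthonormal_cols Q" "col_space Q = col_space A"
    and bound: "\<And>z. norm (M *v (A *v z)) \<le> a * norm (A *v z)"
  shows "spec_norm (M ** Q) \<le> a"
proof (rule spec_norm_le)
  fix y
  obtain z where z: "Q *v y = A *v z"
    using assms(2) unfolding col_space_def by (metis rangeE rangeI)
  have "norm ((M ** Q) *v y) = norm (M *v (A *v z))"
    by (simp add: z flip: matrix_vector_mul_assoc)
  also have "\<dots> \<le> a * norm (A *v z)"
    by (rule bound)
  finally show "norm ((M ** Q) *v y) \<le> a * norm y"
    by (simp flip: z add: orthonormal_cols_norm[OF assms(1)])
qed

text \<open>In the application \<open>Pp\<close> is the projection onto the orthogonal complement of the column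
  space of \<open>W\<^sub>0 = W(\<tau>)\<close>, \<open>K = (W\<^sub>0\<^sup>T W\<^sub>0)\<^sup>-\<^sup>1\<^sup>/\<^sup>2\<close>, \<open>W = W(t)\<close> and \<open>h = t - \<tau>\<close>.\<close>

context
  fixes W\<^sub>0 W W' E Q :: "real^'s^'d" and Pp :: "real^'d^'d" and K :: "real^'s^'s" and h :: real
  assumes h: "0 < h" and W: "W - W\<^sub>0 = h *\<^sub>R (W' + E)"
    and Q: "orthonormal_cols Q" "col_space Q = col_space W"
    and annihilates: "\<And>z. Pp *v (W\<^sub>0 *v z) = 0"
    and K: "orthonormal_cols (W\<^sub>0 ** K)" "invertible K"
begin

lemma norm_le_spec_norm_normalizer: "norm z \<le> spec_norm K * norm (W\<^sub>0 *v z)"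
proof -
  obtain K' where "K ** K' = mat 1"
    using K(2) invertible_right_inverse by blast
  then have z: "z = K *v (K' *v z)"
    by (simp add: matrix_vector_mul_assoc)
  have "norm z \<le> spec_norm K * norm (K' *v z)"
    by (subst z) (rule norm_le_spec_norm)
  also have "norm (K' *v z) = norm (W\<^sub>0 *v z)"
    using orthonormal_cols_norm[OF K(1), of "K' *v z"] z by (simp flip: matrix_vector_mul_assoc)
  finally show ?thesis .
qed

lemma norm_proj_derivative_le: "norm (Pp *v (W' *v z)) \<le> spec_norm (Pp ** W' ** K) * norm (W\<^sub>0 *v z)"
proof -
  obtain K' where "K ** K' = mat 1"
    using K(2) invertible_right_inverse by blast
  then have z: "z = K *v (K' *v z)"
    by (simp add: matrix_vector_mul_assoc)
  have "norm (Pp *v (W' *v z)) = norm ((Pp ** W' ** K) *v (K' *v z))"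
    by (subst z) (simp add: matrix_vector_mul_assoc matrix_mul_assoc)
  also have "\<dots> \<le> spec_norm (Pp ** W' ** K) * norm (K' *v z)"
    by (rule norm_le_spec_norm)
  also have "norm (K' *v z) = norm (W\<^sub>0 *v z)"
    using orthonormal_cols_norm[OF K(1), of "K' *v z"] z by (simp flip: matrix_vector_mul_assoc)
  finally show ?thesis .
qed

lemma proj_perturbation: "Pp *v (W *v z) = h *\<^sub>R (Pp *v (W' *v z) + Pp *v (E *v z))"
proof -
  have "W *v z = W\<^sub>0 *v z + h *\<^sub>R (W' *v z + E *v z)"
    using W by (metis add_diff_cancel_left' diff_add_cancel matrix_vector_mult_add_rdistrib
        scaleR_matrix_vector_assoc)
  then show ?thesis
    by (simp add: annihilates matrix_vector_right_distrib matrix_vector_mult_scaleR)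
qed

lemma norm_perturbation_le:
  "\<bar>norm (W *v z) - norm (W\<^sub>0 *v z)\<bar> \<le> spec_norm (W - W\<^sub>0) * spec_norm K * norm (W\<^sub>0 *v z)"
proof -
  have "\<bar>norm (W *v z) - norm (W\<^sub>0 *v z)\<bar> \<le> norm ((W - W\<^sub>0) *v z)"
    by (metis matrix_vector_mult_diff_rdistrib norm_triangle_ineq3)
  also have "\<dots> \<le> spec_norm (W - W\<^sub>0) * norm z"
    by (rule norm_le_spec_norm)
  also have "\<dots> \<le> spec_norm (W - W\<^sub>0) * (spec_norm K * norm (W\<^sub>0 *v z))"
    by (simp add: mult_left_mono norm_le_spec_norm_normalizer spec_norm_nonneg)
  finally show ?thesis
    by (simp add: mult.assoc)
qed

lemma proj_onb_perturbation_upper: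
  assumes small: "spec_norm (W - W\<^sub>0) * spec_norm K < 1"
  shows "spec_norm (Pp ** Q) / h \<le>
    (spec_norm (Pp ** W' ** K) + spec_norm (Pp ** E) * spec_norm K) / (1 - spec_norm (W - W\<^sub>0) * spec_norm K)"
proof -
  define a where "a = spec_norm (Pp ** W' ** K) + spec_norm (Pp ** E) * spec_norm K"
  define r where "r = 1 - spec_norm (W - W\<^sub>0) * spec_norm K"
  have "norm (Pp *v (W *v z)) \<le> h * a / r * norm (W *v z)" for z
  proof -
    have "norm (Pp *v (E *v z)) \<le> spec_norm (Pp ** E) * norm z"
      using norm_le_spec_norm[of "Pp ** E" z] by (simp flip: matrix_vector_mul_assoc)
    also have "\<dots> \<le> spec_norm (Pp ** E) * (spec_norm K * norm (W\<^sub>0 *v z))"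
      by (simp add: mult_left_mono norm_le_spec_norm_normalizer spec_norm_nonneg)
    finally have "norm (Pp *v (W' *v z) + Pp *v (E *v z)) \<le> a * norm (W\<^sub>0 *v z)"
      using norm_triangle_ineq[of "Pp *v (W' *v z)" "Pp *v (E *v z)"] norm_proj_derivative_le[of z]
      by (simp add: a_def algebra_simps)
    then have "norm (Pp *v (W *v z)) \<le> h * a * norm (W\<^sub>0 *v z)"
      using h by (simp add: proj_perturbation mult.assoc mult_left_mono)
    also have "\<dots> \<le> h * a * (norm (W *v z) / r)"
    proof (rule mult_left_mono)
      have "r * norm (W\<^sub>0 *v z) \<le> norm (W *v z)"
        using norm_perturbation_le[of z] by (simp add: r_def algebra_simps abs_le_iff)
      then show "norm (W\<^sub>0 *v z) \<le> norm (W *v z) / r"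
        using small by (simp add: r_def pos_le_divide_eq mult.commute)
      show "0 \<le> h * a"
        using h by (simp add: a_def spec_norm_nonneg)
    qed
    finally show ?thesis
      by simp
  qed
  then have "spec_norm (Pp ** Q) \<le> h * a / r"
    by (rule spec_norm_mult_onb_le[OF Q])
  then show ?thesis
    using h by (simp add: a_def r_def divide_le_eq mult.commute)
qed

lemma proj_onb_perturbation_lower:
  "spec_norm (Pp ** W' ** K) \<le>
    spec_norm (Pp ** Q) / h * (1 + spec_norm (W - W\<^sub>0) * spec_norm K) + spec_norm (Pp ** E) * spec_norm K"
proof (rule spec_norm_le)
  fix x
  define z where "z = K *v x"
  define \<nu> where "\<nu> = spec_norm (Pp ** Q)"
  have nx: "norm (W\<^sub>0 *v z) = norm x"
    using orthonormal_cols_norm[OF K(1)] by (simp add: z_def matrix_vector_mul_assoc)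
  have "norm (Pp *v (W' *v z)) \<le> norm (Pp *v (W' *v z) + Pp *v (E *v z)) + norm (Pp *v (E *v z))"
    using norm_triangle_ineq4[of "Pp *v (W' *v z) + Pp *v (E *v z)" "Pp *v (E *v z)"] by simp
  then have "h * norm (Pp *v (W' *v z)) \<le> norm (Pp *v (W *v z)) + h * norm (Pp *v (E *v z))"
    using h by (simp add: proj_perturbation distrib_left[symmetric] mult_left_mono)
  also have "norm (Pp *v (W *v z)) \<le> \<nu> * ((1 + spec_norm (W - W\<^sub>0) * spec_norm K) * norm x)"
  proof -
    have "norm (Pp *v (W *v z)) \<le> \<nu> * norm (W *v z)"
      unfolding \<nu>_def by (rule norm_le_spec_norm_mult_onb[OF Q])
    also have "\<dots> \<le> \<nu> * ((1 + spec_norm (W - W\<^sub>0) * spec_norm K) * norm x)"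
      using norm_perturbation_le[of z] nx
      by (intro mult_left_mono) (auto simp: \<nu>_def spec_norm_nonneg algebra_simps abs_le_iff)
    finally show ?thesis .
  qed
  also have "norm (Pp *v (E *v z)) \<le> spec_norm (Pp ** E) * (spec_norm K * norm x)"
  proof -
    have "norm (Pp *v (E *v z)) \<le> spec_norm (Pp ** E) * norm z"
      using norm_le_spec_norm[of "Pp ** E" z] by (simp flip: matrix_vector_mul_assoc)
    also have "\<dots> \<le> spec_norm (Pp ** E) * (spec_norm K * norm x)"
      using norm_le_spec_norm_normalizer[of z] nx by (simp add: mult_left_mono spec_norm_nonneg)
    finally show ?thesis .
  qed
  finally have "norm (Pp *v (W' *v z)) \<le>
      (\<nu> / h * (1 + spec_norm (W - W\<^sub>0) * spec_norm K) + spec_norm (Pp ** E) * spec_norm K) * norm x"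
    using h by (simp add: field_simps mult_left_mono)
  then show "norm ((Pp ** W' ** K) *v x) \<le>
      (spec_norm (Pp ** Q) / h * (1 + spec_norm (W - W\<^sub>0) * spec_norm K) + spec_norm (Pp ** E) * spec_norm K) * norm x"
    by (simp add: z_def \<nu>_def matrix_vector_mul_assoc matrix_mul_assoc)
qed

lemma proj_onb_perturbation_bounds:
  defines "N \<equiv> spec_norm (Pp ** W' ** K)" and "\<beta> \<equiv> spec_norm (W - W\<^sub>0) * spec_norm K"
    and "\<eta> \<equiv> spec_norm (Pp ** E) * spec_norm K"
  assumes small: "\<beta> < 1"
  shows "(N - \<eta>) / (1 + \<beta>) \<le> spec_norm (Pp ** Q) / h \<and> spec_norm (Pp ** Q) / h \<le> (N + \<eta>) / (1 - \<beta>)"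
proof -
  have "0 \<le> \<beta>"
    by (simp add: \<beta>_def spec_norm_nonneg)
  moreover have "N - \<eta> \<le> spec_norm (Pp ** Q) / h * (1 + \<beta>)"
    using proj_onb_perturbation_lower by (simp add: N_def \<beta>_def \<eta>_def)
  ultimately show ?thesis
    using proj_onb_perturbation_upper small by (simp add: N_def \<beta>_def \<eta>_def divide_le_eq add_pos_nonneg)
qed

end

lemma tendsto_matrix_mult_left:
  fixes A :: "'a \<Rightarrow> real^'n^'m" and M :: "real^'m^'k"
  assumes "(A \<longlongrightarrow> B) F"
  shows "((\<lambda>t. M ** A t) \<longlongrightarrow> M ** B) F"
  unfolding matrix_matrix_mult_def by (intro tendsto_intros assms)

lemma tendsto_spec_norm_proj_onb_quotient:
  fixes W\<^sub>0 W' :: "real^'s^'d" and W Q :: "'a \<Rightarrow> real^'s^'d" and Pp :: "real^'d^'d"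
    and K :: "real^'s^'s" and h :: "'a \<Rightarrow> real"
  assumes annihilates: "\<And>z. Pp *v (W\<^sub>0 *v z) = 0"
    and K: "orthonormal_cols (W\<^sub>0 ** K)" "invertible K"
    and Q: "\<forall>\<^sub>F t in F. 0 < h t \<and> orthonormal_cols (Q t) \<and> col_space (Q t) = col_space (W t)"
    and quotient: "((\<lambda>t. (W t - W\<^sub>0) /\<^sub>R h t) \<longlongrightarrow> W') F"
    and cont: "(W \<longlongrightarrow> W\<^sub>0) F"
  shows "((\<lambda>t. spec_norm (Pp ** Q t) / h t) \<longlongrightarrow> spec_norm (Pp ** W' ** K)) F"
proof -
  define N where "N = spec_norm (Pp ** W' ** K)"
  define E where "E t = (W t - W\<^sub>0) /\<^sub>R h t - W'" for t
  define \<beta> where "\<beta> t = spec_norm (W t - W\<^sub>0) * spec_norm K" for t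
  define \<eta> where "\<eta> t = spec_norm (Pp ** E t) * spec_norm K" for t
  have "(E \<longlongrightarrow> 0) F"
    using tendsto_diff[OF quotient tendsto_const[of W']] by (simp add: E_def[abs_def])
  then have "((\<lambda>t. spec_norm (Pp ** E t)) \<longlongrightarrow> 0) F"
    using tendsto_spec_norm_zero tendsto_matrix_mult_left[of E 0 F Pp] by simp
  then have "(\<eta> \<longlongrightarrow> 0) F"
    unfolding \<eta>_def by (rule tendsto_mult_left_zero)
  have "((\<lambda>t. W t - W\<^sub>0) \<longlongrightarrow> 0) F"
    using tendsto_diff[OF cont tendsto_const[of W\<^sub>0]] by simp
  then have "(\<beta> \<longlongrightarrow> 0) F"
    unfolding \<beta>_def by (intro tendsto_mult_left_zero tendsto_spec_norm_zero)
  have "\<forall>\<^sub>F t in F. \<beta> t < 1"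
    using order_tendstoD(2)[OF \<open>(\<beta> \<longlongrightarrow> 0) F\<close>] by simp
  with Q have bounds: "\<forall>\<^sub>F t in F. (N - \<eta> t) / (1 + \<beta> t) \<le> spec_norm (Pp ** Q t) / h t \<and>
      spec_norm (Pp ** Q t) / h t \<le> (N + \<eta> t) / (1 - \<beta> t)"
  proof eventually_elim
    case (elim t)
    then have h: "0 < h t" and Qt: "orthonormal_cols (Q t)" "col_space (Q t) = col_space (W t)"
      by auto
    moreover have "W t - W\<^sub>0 = h t *\<^sub>R (W' + E t)"
      using h by (simp add: E_def)
    ultimately show ?case
      using proj_onb_perturbation_bounds[OF h _ Qt annihilates K] elim by (simp add: N_def \<beta>_def \<eta>_def)
  qed
  moreover have "((\<lambda>t. (N - \<eta> t) / (1 + \<beta> t)) \<longlongrightarrow> (N - 0) / (1 + 0)) F"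
    "((\<lambda>t. (N + \<eta> t) / (1 - \<beta> t)) \<longlongrightarrow> (N + 0) / (1 - 0)) F"
    by (intro tendsto_intros \<open>(\<eta> \<longlongrightarrow> 0) F\<close> \<open>(\<beta> \<longlongrightarrow> 0) F\<close>; simp)+
  ultimately show ?thesis
    using real_tendsto_sandwich[of "\<lambda>t. (N - \<eta> t) / (1 + \<beta> t)" "\<lambda>t. spec_norm (Pp ** Q t) / h t" F
        "\<lambda>t. (N + \<eta> t) / (1 - \<beta> t)" N]
    by (simp add: eventually_conj_iff N_def)
qed

lemma has_vector_derivative_tendsto_quotient:
  fixes f :: "real \<Rightarrow> 'a::real_normed_vector"
  assumes "(f has_vector_derivative f') (at x within S)"
  shows "((\<lambda>y. (f y - f x) /\<^sub>R (y - x)) \<longlongrightarrow> f') (at x within S)"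
proof -
  have "((\<lambda>y. (1 / norm (y - x)) *\<^sub>R (f y - (f x + (y - x) *\<^sub>R f'))) \<longlongrightarrow> 0) (at x within S)"
    using assms unfolding has_vector_derivative_def has_derivative_within by blast
  then have lim: "((\<lambda>y. norm ((1 / norm (y - x)) *\<^sub>R (f y - (f x + (y - x) *\<^sub>R f')))) \<longlongrightarrow> 0)
      (at x within S)"
    by (rule tendsto_norm_zero)
  have "\<forall>\<^sub>F y in at x within S.
      norm ((1 / norm (y - x)) *\<^sub>R (f y - (f x + (y - x) *\<^sub>R f'))) = norm ((f y - f x) /\<^sub>R (y - x) - f')"
  proof (rule eventually_at_filter[THEN iffD2], intro always_eventually allI impI)
    fix y assume "y \<noteq> x"
    then have "(f y - f x) /\<^sub>R (y - x) - f' = (1 / (y - x)) *\<^sub>R (f y - (f x + (y - x) *\<^sub>R f'))"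
      by (simp add: scaleR_diff_right scaleR_add_right divide_inverse)
    then show "norm ((1 / norm (y - x)) *\<^sub>R (f y - (f x + (y - x) *\<^sub>R f'))) =
        norm ((f y - f x) /\<^sub>R (y - x) - f')"
      by simp
  qed
  then have "((\<lambda>y. norm ((f y - f x) /\<^sub>R (y - x) - f')) \<longlongrightarrow> 0) (at x within S)"
    by (rule Lim_transform_eventually[OF lim])
  then show ?thesis
    unfolding Lim_null[of _ f'] tendsto_norm_zero_iff .
qed

lemma has_vector_derivative_at_right:
  assumes "(f has_vector_derivative f') (at x within {a..<b})" and "x \<in> {a..<b}"
  shows "(f has_vector_derivative f') (at_right x)"
proof -
  have sub: "{x..(x + b) / 2} \<subseteq> {a..<b}" and mid: "x < (x + b) / 2"
    using assms(2) by auto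
  have "(f has_vector_derivative f') (at x within {x..(x + b) / 2})"
    by (rule has_vector_derivative_within_subset[OF assms(1) sub])
  then show ?thesis
    by (simp only: at_within_Icc_at_right[OF mid])
qed

lemma proj_complement_annihilates:
  fixes P W :: "real^'s^'d"
  assumes "orthonormal_cols P" "col_space P = col_space W"
  shows "(mat 1 - P ** transpose P) *v (W *v z) = 0"
proof -
  obtain y where "W *v z = P *v y"
    using assms(2) unfolding col_space_def by (metis rangeE rangeI)
  moreover have "transpose P *v (P *v y) = y"
    using assms(1) by (simp add: orthonormal_cols_def matrix_vector_mul_assoc)
  ultimately show ?thesis
    by (simp add: matrix_vector_mult_diff_rdistrib flip: matrix_vector_mul_assoc)
qed

lemma max_principal_angle_eq_arcsin:
  fixes W\<^sub>0 W :: "real^'s^'d"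
  defines "P \<equiv> onb_matrix TYPE('s) (col_space W\<^sub>0)"
  assumes "inj ((*v) W\<^sub>0)" "inj ((*v) W)"
  shows "max_principal_angle TYPE('s) (col_space W\<^sub>0) (col_space W) =
    arcsin (spec_norm ((mat 1 - P ** transpose P) ** onb_matrix TYPE('s) (col_space W)))"
  unfolding max_principal_angle_def P_def
  by (intro arccos_Min_singular_values_orthonormal onb_matrix_col_space assms)

lemma spec_norm_proj_complement_self:
  fixes P :: "real^'s^'d"
  assumes "orthonormal_cols P"
  shows "spec_norm ((mat 1 - P ** transpose P) ** P) = 0"
proof (rule antisym[OF spec_norm_le spec_norm_nonneg])
  show "norm (((mat 1 - P ** transpose P) ** P) *v x) \<le> 0 * norm x" for x
    by (simp add: proj_complement_annihilates[OF assms refl] flip: matrix_vector_mul_assoc)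
qed

context
  fixes W :: "real \<Rightarrow> real^'s^'d" and W' :: "real^'s^'d" and \<tau> :: real
  assumes W': "(W has_vector_derivative W') (at_right \<tau>)"
    and inj: "inj ((*v) (W \<tau>))" and inj_near: "\<forall>\<^sub>F t in at_right \<tau>. inj ((*v) (W t))"
begin

lemma spec_norm_proj_onb_has_right_derivative:
  defines "P \<equiv> onb_matrix TYPE('s) (col_space (W \<tau>))"
  shows "((\<lambda>t. spec_norm ((mat 1 - P ** transpose P) ** onb_matrix TYPE('s) (col_space (W t))))
    has_real_derivative
      spec_norm ((mat 1 - P ** transpose P) ** W' ** matrix_inv (mat_sqrt (transpose (W \<tau>) ** W \<tau>))))
    (at_right \<tau>)"
proof -
  have P: "orthonormal_cols P" "col_space P = col_space (W \<tau>)"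
    using onb_matrix_col_space[OF inj] by (simp_all add: P_def)
  have "((\<lambda>t. spec_norm ((mat 1 - P ** transpose P) ** onb_matrix TYPE('s) (col_space (W t)))
      / (t - \<tau>)) \<longlongrightarrow>
      spec_norm ((mat 1 - P ** transpose P) ** W' ** matrix_inv (mat_sqrt (transpose (W \<tau>) ** W \<tau>))))
      (at_right \<tau>)"
  proof (rule tendsto_spec_norm_proj_onb_quotient)
    show "\<forall>\<^sub>F t in at_right \<tau>. 0 < t - \<tau> \<and> orthonormal_cols (onb_matrix TYPE('s) (col_space (W t))) \<and>
        col_space (onb_matrix TYPE('s) (col_space (W t))) = col_space (W t)"
      using inj_near eventually_at_right_less[of \<tau>]
      by eventually_elim (simp add: onb_matrix_col_space)
    show "((\<lambda>t. (W t - W \<tau>) /\<^sub>R (t - \<tau>)) \<longlongrightarrow> W') (at_right \<tau>)"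
      by (rule has_vector_derivative_tendsto_quotient[OF W'])
    show "(W \<longlongrightarrow> W \<tau>) (at_right \<tau>)"
      using has_vector_derivative_continuous[OF W'] by (simp add: continuous_within)
  qed (use P proj_complement_annihilates orthonormal_cols_gram_normalize[OF inj]
      invertible_inv_gram_sqrt[OF inj] in auto)
  then show ?thesis
    using spec_norm_proj_complement_self[OF P(1)]
    by (simp add: has_field_derivative_iff P_def)
qed

lemma max_principal_angle_has_right_derivative:
  defines "P \<equiv> onb_matrix TYPE('s) (col_space (W \<tau>))"
  shows "((\<lambda>t. max_principal_angle TYPE('s) (col_space (W \<tau>)) (col_space (W t)))
    has_real_derivative
      spec_norm ((mat 1 - P ** transpose P) ** W' ** matrix_inv (mat_sqrt (transpose (W \<tau>) ** W \<tau>))))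
    (at_right \<tau>)"
proof -
  define \<nu> where "\<nu> t = spec_norm ((mat 1 - P ** transpose P) ** onb_matrix TYPE('s) (col_space (W t)))"
    for t
  have angle: "max_principal_angle TYPE('s) (col_space (W \<tau>)) (col_space (W t)) = arcsin (\<nu> t)"
    if "inj ((*v) (W t))" for t
    using max_principal_angle_eq_arcsin[OF inj that] by (simp add: \<nu>_def P_def)
  have "\<nu> \<tau> = 0"
    using spec_norm_proj_complement_self onb_matrix_col_space(1)[OF inj] by (simp add: \<nu>_def P_def)
  then have "DERIV arcsin (\<nu> \<tau>) :> 1"
    using DERIV_arcsin[of 0] by simp
  then have "((\<lambda>t. arcsin (\<nu> t)) has_real_derivative
      1 * spec_norm ((mat 1 - P ** transpose P) ** W' ** matrix_inv (mat_sqrt (transpose (W \<tau>) ** W \<tau>))))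
      (at_right \<tau>)"
    using spec_norm_proj_onb_has_right_derivative unfolding \<nu>_def P_def by (rule DERIV_chain2)
  moreover have "\<forall>\<^sub>F t in at_right \<tau>.
      max_principal_angle TYPE('s) (col_space (W \<tau>)) (col_space (W t)) = arcsin (\<nu> t)"
    using inj_near by eventually_elim (rule angle)
  ultimately show ?thesis
    using angle[OF inj] by (subst has_field_derivative_cong_eventually) auto
qed

end

text \<open>Only the one-sided derivative of \<open>W\<close> at \<open>\<tau>\<close> is used.\<close>

theorem theorem3p5:
  fixes W W' :: "real \<Rightarrow> real^'s^'d" and T :: real
  assumes "T > 0"
    and "\<And>t. t \<in> {0..<T} \<Longrightarrow> (W has_vector_derivative W' t) (at t within {0..<T})"
    and "continuous_on {0..<T} W'"
    and "\<And>t. t \<in> {0..<T} \<Longrightarrow> rank (W t) = CARD('s)"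
    and "\<tau> \<in> {0..<T}"
  shows "((\<lambda>t. max_principal_angle TYPE('s) (col_space (W \<tau>)) (col_space (W t)))
           has_real_derivative
           spec_norm ((mat 1 - (\<chi> i j. orth_proj (col_space (W \<tau>)) (axis j 1) $ i)) ** W' \<tau>
                      ** matrix_inv (mat_sqrt (transpose (W \<tau>) ** W \<tau>))))
         (at_right \<tau>)"
proof -
  have inj: "inj ((*v) (W t))" if "t \<in> {0..<T}" for t
    using assms(4)[OF that] full_rank_injective by blast
  have inj_near: "\<forall>\<^sub>F t in at_right \<tau>. inj ((*v) (W t))"
    using assms(5) by (auto simp: eventually_at_right_field intro!: exI[of _ T] inj)
  have W': "(W has_vector_derivative W' \<tau>) (at_right \<tau>)"
    by (rule has_vector_derivative_at_right[OF assms(2)[OF assms(5)] assms(5)])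
  have "(\<chi> i j. orth_proj (col_space (W \<tau>)) (axis j 1) $ i) =
      onb_matrix TYPE('s) (col_space (W \<tau>)) ** transpose (onb_matrix TYPE('s) (col_space (W \<tau>)))"
    using orth_proj_col_space_matrix onb_matrix_col_space[OF inj[OF assms(5)]] by metis
  then show ?thesis
    using max_principal_angle_has_right_derivative[OF W' inj[OF assms(5)] inj_near] by simp
qed

end
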